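(* Let $e_1,e_2$ be a basis of $\mathbb{Z}^2$. Up to isomorphism, the smooth toric varieties admitting a proper birational toric morphism to $\mathbb{A}^2$ and having nef anticanonical divisor are $\mathbb{A}^2$ and the varieties $Z_m$ ($m\ge1$), where $Z_m$ is the toric variety whose fan has maximal cones $\mathrm{cone}(e_1,e_1+e_2)$, $\mathrm{cone}(e_1+e_2,e_1+2e_2)$, $\dots$, $\mathrm{cone}(e_1+(m-1)e_2,e_1+me_2)$, $\mathrm{cone}(e_1+me_2,e_2)$.
   Context: $\mathbb{A}^2$ is the toric variety with fan $\mathrm{cone}(e_1,e_2)$ and its faces; toric varieties birationally proper over $\mathbb{A}^2$ correspond to fans subdividing $\mathrm{cone}(e_1,e_2)$. *)

theory Defs
  imports Main
begin

text \<open>A smooth fan subdividing cone(e1,e2) is encoded by the list of its rays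
  v_0 = e1, v_1, ..., v_(n+1) = e2, ordered counterclockwise; its maximal
  cones are cone(v_i, v_(i+1)).\<close>

type_synonym vec2 = "int \<times> int"

definition det2 :: "vec2 \<Rightarrow> vec2 \<Rightarrow> int" where
  "det2 u w = fst u * snd w - snd u * fst w"

definition smooth_quadrant_fan :: "vec2 list \<Rightarrow> bool" where
  "smooth_quadrant_fan vs \<longleftrightarrow>
     length vs \<ge> 2 \<and> hd vs = (1, 0) \<and> last vs = (0, 1) \<and>
     (\<forall>v\<in>set vs. fst v \<ge> 0 \<and> snd v \<ge> 0) \<and>
     (\<forall>i. Suc i < length vs \<longrightarrow> det2 (vs ! i) (vs ! Suc i) = 1)"

definition max_cones :: "vec2 list \<Rightarrow> vec2 set set" where
  "max_cones vs = {{vs ! i, vs ! Suc i} | i. Suc i < length vs}"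

text \<open>For an interior ray v_i (0 < i < n+1) the divisor D_i is a compact
  torus-invariant curve; v_(i-1) + v_(i+1) = a_i v_i and D_i.D_i = -a_i,
  D_(i-1).D_i = D_(i+1).D_i = 1, and D_j.D_i = 0 otherwise.\<close>
definition self_int :: "vec2 list \<Rightarrow> nat \<Rightarrow> int" where
  "self_int vs i = - (THE a::int.
      fst (vs ! (i - 1)) + fst (vs ! Suc i) = a * fst (vs ! i) \<and>
      snd (vs ! (i - 1)) + snd (vs ! Suc i) = a * snd (vs ! i))"

definition int_num :: "vec2 list \<Rightarrow> nat \<Rightarrow> nat \<Rightarrow> int" where
  "int_num vs j i =
     (if j = i then self_int vs i
      else if j + 1 = i \<or> j = i + 1 then 1 else 0)"

text \<open>The anticanonical divisor is -K = sum of all D_j; it is nef iff its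
  intersection number with every compact torus-invariant curve D_i is >= 0.\<close>
definition nef_anticanonical :: "vec2 list \<Rightarrow> bool" where
  "nef_anticanonical vs \<longleftrightarrow>
     (\<forall>i. 0 < i \<and> Suc i < length vs \<longrightarrow>
        (\<Sum>j<length vs. int_num vs j i) \<ge> 0)"

definition toric_iso :: "vec2 list \<Rightarrow> vec2 list \<Rightarrow> bool" where
  "toric_iso vs ws \<longleftrightarrow>
     (\<exists>a b c d :: int. \<bar>a * d - b * c\<bar> = 1 \<and>
        (\<lambda>S. (\<lambda>(x, y). (a * x + b * y, c * x + d * y)) ` S) ` max_cones vs
          = max_cones ws)"

definition A2_fan :: "vec2 list" where
  "A2_fan = [(1, 0), (0, 1)]"

definition Z_fan :: "nat \<Rightarrow> vec2 list" where
  "Z_fan m = [(1, 0)] @ map (\<lambda>k. (1, int k)) [1..<Suc m] @ [(0, 1)]"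

end

theory Submission
  imports Defs
begin

text \<open>Write v_0 = e1, ..., v_(n+1) = e2 for the rays. Smoothness gives the wall relations
  v_(i-1) + v_(i+1) = a_i v_i with a_i = det(v_(i-1), v_(i+1)) > 0, and -K.D_i = 2 - a_i; so -K is
  nef iff every a_i \<le> 2, i.e. iff both coordinate sequences of the rays are concave.
  If v_1 has first coordinate 1, concavity pins the first coordinate to 1 and the fan is Z_n.
  Otherwise let k be the first descent of the first coordinate: a_k = 2 would continue the ascent,
  so a_k = 1 and v_(k+1) = v_k - v_(k-1) has second coordinate 1, after which concavity forces the
  second coordinate of v_n to be 1, and the mirror image of the fan is Z_n.
  Conversely, a toric isomorphism maps adjacent maximal cones to adjacent maximal cones and
  preserves |det|, hence preserves nefness.\<close>

lemma det2_self [simp]: "det2 u u = 0"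
  by (simp add: det2_def)

lemma abs_det2_commute: "\<bar>det2 w u\<bar> = \<bar>det2 u w\<bar>"
  by (simp add: det2_def abs_minus_commute mult.commute)

lemma det2_swap: "det2 (prod.swap u) (prod.swap w) = det2 w u"
  by (simp add: det2_def)

lemma det2_linear_map:
  "det2 (a * fst p + b * snd p, c * fst p + d * snd p) (a * fst q + b * snd q, c * fst q + d * snd q)
     = (a * d - b * c) * det2 p q"
  by (simp add: det2_def algebra_simps)

lemma det2_relation:
  "det2 u v * fst w + det2 v w * fst u = det2 u w * fst v"
  "det2 u v * snd w + det2 v w * snd u = det2 u w * snd v"
  by (simp_all add: det2_def algebra_simps)

lemma det2_pos_trans:
  assumes nonneg: "\<forall>p\<in>{u, v, w}. fst p \<ge> 0 \<and> snd p \<ge> 0"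
    and uv: "det2 u v > 0" and vw: "det2 v w > 0"
  shows "det2 u w > 0"
proof (rule ccontr)
  assume "\<not> det2 u w > 0"
  then have "det2 u w * fst v \<le> 0" "det2 u w * snd v \<le> 0"
    using nonneg by (auto intro: mult_nonpos_nonneg)
  moreover have "det2 u v * fst w \<ge> 0" "det2 v w * fst u \<ge> 0"
    "det2 u v * snd w \<ge> 0" "det2 v w * snd u \<ge> 0"
    using nonneg uv vw by auto
  ultimately have "det2 v w * fst u = 0" "det2 v w * snd u = 0"
    using det2_relation[of u v w] by linarith+
  then have "u = (0, 0)"
    using vw by (simp add: prod_eq_iff)
  with uv show False
    by (simp add: det2_def)
qed

lemma smooth_quadrant_fan_det2:
  "smooth_quadrant_fan vs \<Longrightarrow> Suc i < length vs \<Longrightarrow> det2 (vs ! i) (vs ! Suc i) = 1"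
  unfolding smooth_quadrant_fan_def by blast

lemma smooth_quadrant_fan_nonneg:
  assumes "smooth_quadrant_fan vs" "i < length vs"
  shows "fst (vs ! i) \<ge> 0" "snd (vs ! i) \<ge> 0"
  using assms nth_mem[OF assms(2)] unfolding smooth_quadrant_fan_def by blast+

lemma smooth_quadrant_fan_first:
  "smooth_quadrant_fan vs \<Longrightarrow> vs ! 0 = (1, 0)"
  unfolding smooth_quadrant_fan_def by (metis hd_conv_nth list.size(3) not_numeral_le_zero)

lemma smooth_quadrant_fan_last:
  "smooth_quadrant_fan vs \<Longrightarrow> vs ! (length vs - 1) = (0, 1)"
  unfolding smooth_quadrant_fan_def by (metis last_conv_nth list.size(3) not_numeral_le_zero)

lemma smooth_quadrant_fan_det2_pos:
  assumes fan: "smooth_quadrant_fan vs" and "i < j" "j < length vs"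
  shows "det2 (vs ! i) (vs ! j) > 0"
  using assms(2,3)
proof (induction i j rule: less_Suc_induct)
  case (1 i)
  then show ?case using smooth_quadrant_fan_det2[OF fan] by simp
next
  case (2 i j k)
  then show ?case
    using det2_pos_trans[of "vs ! i" "vs ! j" "vs ! k"] smooth_quadrant_fan_nonneg[OF fan] by simp
qed

lemma smooth_quadrant_fan_nth_inj:
  assumes fan: "smooth_quadrant_fan vs" and "i < length vs" "j < length vs" "vs ! i = vs ! j"
  shows "i = j"
  using assms smooth_quadrant_fan_det2_pos[OF fan, of i j] smooth_quadrant_fan_det2_pos[OF fan, of j i]
  by (cases i j rule: linorder_cases) auto

lemma smooth_quadrant_fan_interior_pos:
  assumes fan: "smooth_quadrant_fan vs" and "0 < i" "Suc i < length vs"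
  shows "fst (vs ! i) \<ge> 1" "snd (vs ! i) \<ge> 1"
proof -
  have "det2 (vs ! i) (vs ! (length vs - 1)) > 0" "det2 (vs ! 0) (vs ! i) > 0"
    using assms smooth_quadrant_fan_det2_pos[OF fan] by auto
  then show "fst (vs ! i) \<ge> 1" "snd (vs ! i) \<ge> 1"
    using smooth_quadrant_fan_first[OF fan] smooth_quadrant_fan_last[OF fan]
    by (simp_all add: det2_def)
qed

lemma smooth_quadrant_fan_wall_relation:
  assumes fan: "smooth_quadrant_fan vs" and "Suc (Suc j) < length vs"
  shows "fst (vs ! j) + fst (vs ! Suc (Suc j)) = det2 (vs ! j) (vs ! Suc (Suc j)) * fst (vs ! Suc j)"
    and "snd (vs ! j) + snd (vs ! Suc (Suc j)) = det2 (vs ! j) (vs ! Suc (Suc j)) * snd (vs ! Suc j)"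
  using det2_relation[of "vs ! j" "vs ! Suc j" "vs ! Suc (Suc j)"] assms
    smooth_quadrant_fan_det2[OF fan, of j] smooth_quadrant_fan_det2[OF fan, of "Suc j"]
  by simp_all

lemma self_int_eq_det2:
  assumes fan: "smooth_quadrant_fan vs" and j: "Suc (Suc j) < length vs"
  shows "self_int vs (Suc j) = - det2 (vs ! j) (vs ! Suc (Suc j))"
proof -
  have "vs ! Suc j \<noteq> (0, 0)"
    using smooth_quadrant_fan_det2[OF fan, of "Suc j"] j by (auto simp: det2_def)
  then have "(THE a. fst (vs ! j) + fst (vs ! Suc (Suc j)) = a * fst (vs ! Suc j) \<and>
                    snd (vs ! j) + snd (vs ! Suc (Suc j)) = a * snd (vs ! Suc j))
             = det2 (vs ! j) (vs ! Suc (Suc j))"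
    using smooth_quadrant_fan_wall_relation[OF fan j] by (intro the_equality) (auto simp: prod_eq_iff)
  then show ?thesis
    by (simp add: self_int_def)
qed

lemma anticanonical_intersection_eq:
  assumes fan: "smooth_quadrant_fan vs" and j: "Suc (Suc j) < length vs"
  shows "(\<Sum>k<length vs. int_num vs k (Suc j)) = 2 - det2 (vs ! j) (vs ! Suc (Suc j))"
proof -
  have "int_num vs k (Suc j) = (if k = Suc j then self_int vs (Suc j) else 0)
      + (if k = j then 1 else 0) + (if k = Suc (Suc j) then 1 else 0)" for k
    by (auto simp: int_num_def)
  then have "(\<Sum>k<length vs. int_num vs k (Suc j)) = self_int vs (Suc j) + 2"
    using j by (simp add: sum.distrib)
  then show ?thesis
    using self_int_eq_det2[OF fan j] by simp
qed

lemma nef_anticanonical_iff_det2_le_2: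
  assumes fan: "smooth_quadrant_fan vs"
  shows "nef_anticanonical vs \<longleftrightarrow>
           (\<forall>j. Suc (Suc j) < length vs \<longrightarrow> det2 (vs ! j) (vs ! Suc (Suc j)) \<le> 2)"
  unfolding nef_anticanonical_def
  by (metis anticanonical_intersection_eq[OF fan] diff_ge_0_iff_ge gr0_conv_Suc)

definition concave_on_prefix :: "nat \<Rightarrow> (nat \<Rightarrow> int) \<Rightarrow> bool" where
  "concave_on_prefix N f \<longleftrightarrow>
     (\<forall>j. Suc (Suc j) < N \<longrightarrow> f j + f (Suc (Suc j)) \<le> 2 * f (Suc j))"

lemma concave_on_prefix_diff_antimono:
  assumes "concave_on_prefix N f" "k \<le> j" "Suc j < N"
  shows "f (Suc j) - f j \<le> f (Suc k) - f k"
  using assms(2,3)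
proof (induction j rule: dec_induct)
  case (step j)
  then show ?case
    using assms(1) unfolding concave_on_prefix_def by force
qed simp

lemma concave_on_prefix_le_tangent:
  assumes "concave_on_prefix N f" "k \<le> j" "j < N"
  shows "f j \<le> f k + int (j - k) * (f (Suc k) - f k)"
  using assms(2,3)
proof (induction j rule: dec_induct)
  case (step j)
  have "f (Suc j) - f j \<le> f (Suc k) - f k"
    using concave_on_prefix_diff_antimono[OF assms(1) step.hyps(1)] step.prems by simp
  with step show ?case
    by (simp add: Suc_diff_le algebra_simps)
qed simp

lemma nef_fan_coordinates_concave:
  assumes fan: "smooth_quadrant_fan vs" and nef: "nef_anticanonical vs"
  shows "concave_on_prefix (length vs) (\<lambda>i. fst (vs ! i))"
    and "concave_on_prefix (length vs) (\<lambda>i. snd (vs ! i))"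
proof -
  have "fst (vs ! j) + fst (vs ! Suc (Suc j)) \<le> 2 * fst (vs ! Suc j) \<and>
        snd (vs ! j) + snd (vs ! Suc (Suc j)) \<le> 2 * snd (vs ! Suc j)"
    if j: "Suc (Suc j) < length vs" for j
  proof -
    have "det2 (vs ! j) (vs ! Suc (Suc j)) \<le> 2"
      using nef j unfolding nef_anticanonical_iff_det2_le_2[OF fan] by blast
    then show ?thesis
      using smooth_quadrant_fan_wall_relation[OF fan j] smooth_quadrant_fan_nonneg[OF fan, of "Suc j"] j
      by (simp add: mult_right_mono)
  qed
  then show "concave_on_prefix (length vs) (\<lambda>i. fst (vs ! i))"
    and "concave_on_prefix (length vs) (\<lambda>i. snd (vs ! i))"
    unfolding concave_on_prefix_def by simp_all
qed

lemma length_Z_fan: "length (Z_fan m) = m + 2"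
  by (simp add: Z_fan_def)

lemma nth_Z_fan:
  assumes "i \<le> m + 1"
  shows "Z_fan m ! i = (if i = 0 then (1, 0) else if i \<le> m then (1, int i) else (0, 1))"
proof (cases i)
  case (Suc j)
  then consider "j < m" | "j = m"
    using assms by linarith
  then show ?thesis
    by cases (use Suc in \<open>simp_all add: Z_fan_def nth_append del: upt_Suc\<close>)
qed (simp add: Z_fan_def)

lemma nef_fan_eq_Z_fan:
  assumes fan: "smooth_quadrant_fan vs" and nef: "nef_anticanonical vs"
    and len: "length vs = n + 2" and first: "fst (vs ! 1) = 1"
  shows "vs = Z_fan n"
proof -
  have v0: "vs ! 0 = (1, 0)" and vl: "vs ! Suc n = (0, 1)"
    using smooth_quadrant_fan_first[OF fan] smooth_quadrant_fan_last[OF fan] len by simp_all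
  have fst_eq: "fst (vs ! i) = 1" if "i \<le> n" for i
  proof -
    have "fst (vs ! i) \<le> 1"
      using concave_on_prefix_le_tangent[OF nef_fan_coordinates_concave(1)[OF fan nef], of 0 i]
        that len v0 first by simp
    moreover have "fst (vs ! i) \<ge> 1"
      using smooth_quadrant_fan_interior_pos[OF fan, of i] that len v0 by (cases "i = 0") auto
    ultimately show ?thesis by simp
  qed
  have snd_eq: "snd (vs ! i) = int i" if "i \<le> n" for i
    using that
  proof (induction i)
    case (Suc i)
    then show ?case
      using smooth_quadrant_fan_det2[OF fan, of i] fst_eq[of i] fst_eq[of "Suc i"] len
      by (simp add: det2_def)
  qed (simp add: v0)
  show ?thesis
  proof (rule nth_equalityI)
    show "length vs = length (Z_fan n)"
      using len by (simp add: length_Z_fan)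
  next
    fix i assume "i < length vs"
    then consider "i \<le> n" | "i = n + 1"
      using len by linarith
    then show "vs ! i = Z_fan n ! i"
      by cases (auto simp: nth_Z_fan v0 vl fst_eq snd_eq prod_eq_iff)
  qed
qed

lemma nef_fan_snd_last_interior_eq_1:
  assumes fan: "smooth_quadrant_fan vs" and nef: "nef_anticanonical vs"
    and len: "length vs = n + 2" and n: "1 \<le> n" and "fst (vs ! 1) \<noteq> 1"
  shows "snd (vs ! n) = 1"
proof -
  define x where "x i = fst (vs ! i)" for i
  define y where "y i = snd (vs ! i)" for i
  have x0: "x 0 = 1" and y0: "y 0 = 0" and xl: "x (Suc n) = 0"
    using smooth_quadrant_fan_first[OF fan] smooth_quadrant_fan_last[OF fan] len
    by (simp_all add: x_def y_def)
  have pos: "x i \<ge> 1" "y i \<ge> 1" if "1 \<le> i" "i \<le> n" for i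
    using smooth_quadrant_fan_interior_pos[OF fan, of i] that len by (simp_all add: x_def y_def)
  have "x 1 > x 0"
    using \<open>fst (vs ! 1) \<noteq> 1\<close> pos[of 1] n x0 by (simp add: x_def)
  obtain j where up: "x j < x (Suc j)" and down: "x (Suc (Suc j)) \<le> x (Suc j)"
    and j: "Suc j \<le> n"
  proof -
    have "x (Suc n) \<le> x n"
      using xl pos[of n] n by simp
    then have "\<exists>k. x (Suc k) \<le> x k" ..
    define k where "k = (LEAST k. x (Suc k) \<le> x k)"
    have "x (Suc k) \<le> x k"
      unfolding k_def using LeastI_ex[OF \<open>\<exists>k. _\<close>] .
    moreover have "k \<le> n"
      unfolding k_def using \<open>x (Suc n) \<le> x n\<close> by (rule Least_le)
    moreover have "k \<noteq> 0"
      using \<open>x 1 > x 0\<close> \<open>x (Suc k) \<le> x k\<close> by (metis One_nat_def not_less)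
    moreover have "x (k - 1) < x k"
      using not_less_Least[of "k - 1" "\<lambda>k. x (Suc k) \<le> x k"] \<open>k \<noteq> 0\<close> unfolding k_def by simp
    ultimately show ?thesis
      using that[of "k - 1"] by simp
  qed
  define a where "a = det2 (vs ! j) (vs ! Suc (Suc j))"
  have jlen: "Suc (Suc j) < length vs"
    using j len by simp
  have wall: "x j + x (Suc (Suc j)) = a * x (Suc j)" "y j + y (Suc (Suc j)) = a * y (Suc j)"
    using smooth_quadrant_fan_wall_relation[OF fan jlen] by (simp_all add: x_def y_def a_def)
  have "0 < a" "a \<le> 2"
    using smooth_quadrant_fan_det2_pos[OF fan, of j "Suc (Suc j)"] nef jlen
    unfolding a_def nef_anticanonical_iff_det2_le_2[OF fan] by auto
  moreover have "a \<noteq> 2"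
    using wall(1) up down by auto
  ultimately have "a = 1" by simp
  have "Suc (Suc j) \<noteq> Suc n"
    using wall(1) \<open>a = 1\<close> up xl by auto
  then have j': "Suc (Suc j) \<le> n"
    using j by simp
  have "y 1 = 1"
    using smooth_quadrant_fan_det2[OF fan, of 0] smooth_quadrant_fan_first[OF fan] len
    by (simp add: y_def det2_def)
  have y_concave: "concave_on_prefix (length vs) y"
    unfolding y_def by (rule nef_fan_coordinates_concave(2)[OF fan nef])
  have y_next: "y (Suc (Suc j)) = 1"
  proof -
    have "y (Suc (Suc j)) \<le> y (Suc 0) - y 0"
      using wall(2) \<open>a = 1\<close> concave_on_prefix_diff_antimono[OF y_concave, of 0 j] jlen by simp
    then show ?thesis
      using \<open>y 1 = 1\<close> y0 pos(2)[of "Suc (Suc j)"] j' by simp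
  qed
  have "y n \<le> y (Suc j) + int (n - Suc j) * (1 - y (Suc j))"
    using concave_on_prefix_le_tangent[OF y_concave, of "Suc j" n] y_next j len by simp
  also have "\<dots> \<le> y (Suc j) + (1 - y (Suc j))"
    using mult_right_mono_neg[of 1 "int (n - Suc j)" "1 - y (Suc j)"] pos(2)[of "Suc j"] j j' by simp
  finally show ?thesis
    using pos(2)[of n] n by (simp add: y_def)
qed

definition mirror_fan :: "vec2 list \<Rightarrow> vec2 list" where
  "mirror_fan vs = rev (map prod.swap vs)"

lemma length_mirror_fan [simp]: "length (mirror_fan vs) = length vs"
  by (simp add: mirror_fan_def)

lemma nth_mirror_fan:
  "i < length vs \<Longrightarrow> mirror_fan vs ! i = prod.swap (vs ! (length vs - Suc i))"
  by (simp add: mirror_fan_def rev_nth)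

lemma mirror_fan_mirror_fan [simp]: "mirror_fan (mirror_fan vs) = vs"
  by (simp add: mirror_fan_def rev_map)

lemma smooth_quadrant_fan_mirror_fan:
  assumes fan: "smooth_quadrant_fan vs"
  shows "smooth_quadrant_fan (mirror_fan vs)"
  unfolding smooth_quadrant_fan_def
proof (intro conjI allI impI ballI)
  have "vs \<noteq> []"
    using fan unfolding smooth_quadrant_fan_def by auto
  then show "hd (mirror_fan vs) = (1, 0)" "last (mirror_fan vs) = (0, 1)"
    using fan unfolding smooth_quadrant_fan_def
    by (simp_all add: mirror_fan_def hd_rev last_rev hd_map last_map)
  show "2 \<le> length (mirror_fan vs)"
    using fan unfolding smooth_quadrant_fan_def by simp
next
  fix v assume "v \<in> set (mirror_fan vs)"
  then show "0 \<le> fst v" "0 \<le> snd v"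
    using fan unfolding smooth_quadrant_fan_def mirror_fan_def by auto
next
  fix i assume i: "Suc i < length (mirror_fan vs)"
  then have "length vs - Suc i = Suc (length vs - Suc (Suc i))"
    by simp
  then show "det2 (mirror_fan vs ! i) (mirror_fan vs ! Suc i) = 1"
    using smooth_quadrant_fan_det2[OF fan, of "length vs - Suc (Suc i)"] i
    by (simp add: nth_mirror_fan det2_swap)
qed

lemma max_cones_map: "max_cones (map f vs) = (\<lambda>S. f ` S) ` max_cones vs"
  unfolding max_cones_def by (simp add: setcompr_eq_image image_image)

lemma max_cones_rev: "max_cones (rev vs) = max_cones vs"
proof -
  have "\<exists>j. {rev ws ! i, rev ws ! Suc i} = {ws ! j, ws ! Suc j} \<and> Suc j < length ws"
    if "Suc i < length (rev ws)" for ws :: "'a list" and i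
    using that by (intro exI[of _ "length ws - Suc (Suc i)"]) (auto simp: rev_nth Suc_diff_Suc)
  from this[of _ vs] this[of _ "rev vs"] show ?thesis
    unfolding max_cones_def by fastforce
qed

lemma toric_iso_refl: "toric_iso vs vs"
  unfolding toric_iso_def by (rule exI[of _ 1], rule exI[of _ 0], rule exI[of _ 0], rule exI[of _ 1]) simp

lemma toric_iso_mirror_fan: "toric_iso (mirror_fan vs) vs"
proof -
  have "(\<lambda>S. prod.swap ` S) ` max_cones (mirror_fan vs) = max_cones vs"
    by (simp add: mirror_fan_def max_cones_rev max_cones_map image_image)
  moreover have "(\<lambda>(x, y). (0 * x + 1 * y, 1 * x + 0 * y)) = (prod.swap :: vec2 \<Rightarrow> vec2)"
    by auto
  ultimately show ?thesis
    unfolding toric_iso_def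
    by (intro exI[of _ 0] exI[of _ 1] exI[of _ 1] exI[of _ 0]) simp
qed

lemma max_cones_nth: "Suc i < length vs \<Longrightarrow> {vs ! i, vs ! Suc i} \<in> max_cones vs"
  unfolding max_cones_def by blast

lemma max_cones_neighbour:
  assumes fan: "smooth_quadrant_fan ws" and i: "i < length ws"
    and cone: "{ws ! i, p} \<in> max_cones ws"
  shows "(\<exists>j. i = Suc j \<and> p = ws ! j) \<or> (Suc i < length ws \<and> p = ws ! Suc i)"
proof -
  obtain k where k: "{ws ! i, p} = {ws ! k, ws ! Suc k}" "Suc k < length ws"
    using cone unfolding max_cones_def by blast
  then have "ws ! i = ws ! k \<and> p = ws ! Suc k \<or> ws ! i = ws ! Suc k \<and> p = ws ! k"
    by (simp add: doubleton_eq_iff)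
  with k(2) show ?thesis
    using smooth_quadrant_fan_nth_inj[OF fan i] by (metis Suc_lessD)
qed

lemma max_cones_adjacent:
  assumes fan: "smooth_quadrant_fan ws"
    and pq: "{p, q} \<in> max_cones ws" and qr: "{q, r} \<in> max_cones ws" and "p \<noteq> r"
  shows "\<exists>j. Suc (Suc j) < length ws \<and> {p, r} = {ws ! j, ws ! Suc (Suc j)}"
proof -
  obtain k where "{q, r} = {ws ! k, ws ! Suc k}" "Suc k < length ws"
    using qr unfolding max_cones_def by blast
  then obtain i where i: "i < length ws" "q = ws ! i"
    by (metis doubleton_eq_iff Suc_lessD)
  have "{ws ! i, p} \<in> max_cones ws" "{ws ! i, r} \<in> max_cones ws"
    using pq qr i(2) by (metis insert_commute)+
  from this[THEN max_cones_neighbour[OF fan i(1)]] \<open>p \<noteq> r\<close> show ?thesis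
    by (elim disjE exE conjE) (auto simp: insert_commute)
qed

lemma nef_anticanonical_toric_iso:
  assumes fan_vs: "smooth_quadrant_fan vs" and fan_ws: "smooth_quadrant_fan ws"
    and iso: "toric_iso vs ws" and nef: "nef_anticanonical ws"
  shows "nef_anticanonical vs"
proof -
  obtain a b c d :: int where unimodular: "\<bar>a * d - b * c\<bar> = 1"
    and cones: "(\<lambda>S. (\<lambda>(x, y). (a * x + b * y, c * x + d * y)) ` S) ` max_cones vs = max_cones ws"
    using iso unfolding toric_iso_def by (elim exE conjE) (rule that)
  define L where "L = (\<lambda>(x::int, y::int). (a * x + b * y, c * x + d * y))"
  have L_cone: "L ` S \<in> max_cones ws" if "S \<in> max_cones vs" for S
    using that cones unfolding L_def by blast
  have det2_L: "\<bar>det2 (L p) (L q)\<bar> = \<bar>det2 p q\<bar>" for p q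
    using unimodular by (simp add: L_def case_prod_beta det2_linear_map abs_mult)
  show ?thesis
    unfolding nef_anticanonical_iff_det2_le_2[OF fan_vs]
  proof (intro allI impI)
    fix j assume j: "Suc (Suc j) < length vs"
    have "{L (vs ! j), L (vs ! Suc j)} \<in> max_cones ws"
      "{L (vs ! Suc j), L (vs ! Suc (Suc j))} \<in> max_cones ws"
      using L_cone[OF max_cones_nth, of j] L_cone[OF max_cones_nth, of "Suc j"] j by simp_all
    moreover have pos: "det2 (vs ! j) (vs ! Suc (Suc j)) > 0"
      using smooth_quadrant_fan_det2_pos[OF fan_vs] j by simp
    then have "L (vs ! j) \<noteq> L (vs ! Suc (Suc j))"
      using det2_L[of "vs ! j" "vs ! Suc (Suc j)"] by auto
    ultimately obtain k where k: "Suc (Suc k) < length ws"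
      "{L (vs ! j), L (vs ! Suc (Suc j))} = {ws ! k, ws ! Suc (Suc k)}"
      using max_cones_adjacent[OF fan_ws] by blast
    have "det2 (vs ! j) (vs ! Suc (Suc j)) = \<bar>det2 (ws ! k) (ws ! Suc (Suc k))\<bar>"
      using k(2) det2_L[of "vs ! j" "vs ! Suc (Suc j)"] pos abs_det2_commute
      by (metis abs_of_pos doubleton_eq_iff)
    also have "\<dots> \<le> 2"
      using nef k(1) smooth_quadrant_fan_det2_pos[OF fan_ws, of k "Suc (Suc k)"]
      unfolding nef_anticanonical_iff_det2_le_2[OF fan_ws] by simp
    finally show "det2 (vs ! j) (vs ! Suc (Suc j)) \<le> 2" .
  qed
qed

lemma smooth_quadrant_fan_A2_fan: "smooth_quadrant_fan A2_fan"
  unfolding smooth_quadrant_fan_def A2_fan_def by (auto simp: det2_def less_Suc_eq)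

lemma nef_anticanonical_A2_fan: "nef_anticanonical A2_fan"
  unfolding nef_anticanonical_def A2_fan_def by auto

lemma smooth_quadrant_fan_Z_fan:
  assumes "m \<ge> 1"
  shows "smooth_quadrant_fan (Z_fan m)"
  unfolding smooth_quadrant_fan_def
proof (intro conjI ballI allI impI)
  show "2 \<le> length (Z_fan m)" "hd (Z_fan m) = (1, 0)" "last (Z_fan m) = (0, 1)"
    by (simp_all add: Z_fan_def)
next
  fix v assume "v \<in> set (Z_fan m)"
  then show "0 \<le> fst v" "0 \<le> snd v"
    by (auto simp: Z_fan_def)
next
  fix i assume "Suc i < length (Z_fan m)"
  then show "det2 (Z_fan m ! i) (Z_fan m ! Suc i) = 1"
    using assms by (auto simp: nth_Z_fan length_Z_fan det2_def)
qed

lemma nef_anticanonical_Z_fan: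
  assumes "m \<ge> 1"
  shows "nef_anticanonical (Z_fan m)"
  unfolding nef_anticanonical_iff_det2_le_2[OF smooth_quadrant_fan_Z_fan[OF assms]]
  by (auto simp: nth_Z_fan length_Z_fan det2_def)

lemma nef_fan_classification:
  assumes fan: "smooth_quadrant_fan vs" and nef: "nef_anticanonical vs"
  shows "vs = A2_fan \<or> (\<exists>m\<ge>1. vs = Z_fan m \<or> vs = mirror_fan (Z_fan m))"
proof -
  obtain n where len: "length vs = n + 2"
    using fan unfolding smooth_quadrant_fan_def by (metis le_add_diff_inverse2)
  show ?thesis
  proof (cases "n = 0")
    case True
    then have "vs = A2_fan"
      using len smooth_quadrant_fan_first[OF fan] smooth_quadrant_fan_last[OF fan]
      by (intro nth_equalityI) (auto simp: A2_fan_def less_Suc_eq)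
    then show ?thesis ..
  next
    case False
    then have "n \<ge> 1" by simp
    show ?thesis
    proof (cases "fst (vs ! 1) = 1")
      case True
      then show ?thesis
        using nef_fan_eq_Z_fan[OF fan nef len] \<open>n \<ge> 1\<close> by blast
    next
      case first: False
      have mirror: "smooth_quadrant_fan (mirror_fan vs)" "nef_anticanonical (mirror_fan vs)"
        using smooth_quadrant_fan_mirror_fan[OF fan] nef_anticanonical_toric_iso
          fan toric_iso_mirror_fan nef by blast+
      have "fst (mirror_fan vs ! 1) = snd (vs ! n)"
        using len by (simp add: nth_mirror_fan)
      also have "\<dots> = 1"
        using nef_fan_snd_last_interior_eq_1[OF fan nef len \<open>n \<ge> 1\<close> first] .
      finally have "mirror_fan vs = Z_fan n"
        using nef_fan_eq_Z_fan[OF mirror] len by simp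
      then show ?thesis
        using \<open>n \<ge> 1\<close> by (metis mirror_fan_mirror_fan)
    qed
  qed
qed

theorem lemma5p5:
  shows "smooth_quadrant_fan A2_fan \<and> (\<forall>m\<ge>1. smooth_quadrant_fan (Z_fan m)) \<and>
         (\<forall>vs. smooth_quadrant_fan vs \<longrightarrow>
           (nef_anticanonical vs \<longleftrightarrow>
             toric_iso vs A2_fan \<or> (\<exists>m\<ge>1. toric_iso vs (Z_fan m))))"
proof -
  have "nef_anticanonical vs \<longleftrightarrow>
          toric_iso vs A2_fan \<or> (\<exists>m\<ge>1. toric_iso vs (Z_fan m))"
    if fan: "smooth_quadrant_fan vs" for vs
  proof
    assume "nef_anticanonical vs"
    then show "toric_iso vs A2_fan \<or> (\<exists>m\<ge>1. toric_iso vs (Z_fan m))"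
      using nef_fan_classification[OF fan] toric_iso_refl toric_iso_mirror_fan by metis
  next
    assume "toric_iso vs A2_fan \<or> (\<exists>m\<ge>1. toric_iso vs (Z_fan m))"
    then show "nef_anticanonical vs"
      using nef_anticanonical_toric_iso[OF fan] smooth_quadrant_fan_A2_fan nef_anticanonical_A2_fan
        smooth_quadrant_fan_Z_fan nef_anticanonical_Z_fan by blast
  qed
  then show ?thesis
    using smooth_quadrant_fan_A2_fan smooth_quadrant_fan_Z_fan by blast
qed

end
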